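(* Suppose that (i) $K:\mathbb R^p\rightrightarrows\mathbb R^n$ is concave, and (ii) $f:\mathbb R^p\times\mathbb R^n\times\mathbb R^n\to\mathbb R^m$ is $C$-concave. Then $\nu(\xi,x)=\sup_{z\in K(\xi)}\operatorname{dist}(f(\xi,x,z),C)$ is a convex function (with values in $[0,+\infty]$) on $\mathbb R^p\times\mathbb R^n$.
   Context: $C\subset\mathbb R^m$ is a nontrivial closed, convex, pointed cone; $K$ has closed graph and nonempty values (standing assumption). A mapping $g:X\to Y$ is $C$-concave if $g(tx_1+(1-t)x_2)-tg(x_1)-(1-t)g(x_2)\in C$ for all $x_1,x_2\in X$, $t\in[0,1]$. A set-valued mapping $F:X\rightrightarrows Y$ is concave if $F(tx_1+(1-t)x_2)\subseteq tF(x_1)+(1-t)F(x_2)$ for all $x_1,x_2$, $t\in[0,1]$. *)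

theory Defs
  imports "HOL-Analysis.Analysis"
begin

definition closed_convex_pointed_cone :: "'a::euclidean_space set \<Rightarrow> bool" where
  "closed_convex_pointed_cone C \<longleftrightarrow>
     cone C \<and> closed C \<and> convex C \<and> C \<inter> uminus ` C = {0} \<and> C \<noteq> {0}"

definition C_concave :: "'c::real_vector set \<Rightarrow> ('a::real_vector \<Rightarrow> 'c) \<Rightarrow> bool" where
  "C_concave C g \<longleftrightarrow>
     (\<forall>x1 x2 t. 0 \<le> t \<and> t \<le> 1 \<longrightarrow>
        g (t *\<^sub>R x1 + (1 - t) *\<^sub>R x2) - t *\<^sub>R g x1 - (1 - t) *\<^sub>R g x2 \<in> C)"

definition setvalued_concave :: "('a::real_vector \<Rightarrow> 'b::real_vector set) \<Rightarrow> bool" where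
  "setvalued_concave F \<longleftrightarrow>
     (\<forall>x1 x2 t. 0 \<le> t \<and> t \<le> 1 \<longrightarrow>
        F (t *\<^sub>R x1 + (1 - t) *\<^sub>R x2) \<subseteq>
          {t *\<^sub>R a + (1 - t) *\<^sub>R b | a b. a \<in> F x1 \<and> b \<in> F x2})"

text \<open>Convexity of an extended-real-valued function (values in [0,+inf] here),
  using extended-real arithmetic (0 * inf = 0).\<close>
definition ereal_convex_fun :: "('a::real_vector \<Rightarrow> ereal) \<Rightarrow> bool" where
  "ereal_convex_fun h \<longleftrightarrow>
     (\<forall>u v t. 0 \<le> t \<and> t \<le> 1 \<longrightarrow>
        h (t *\<^sub>R u + (1 - t) *\<^sub>R v) \<le> ereal t * h u + ereal (1 - t) * h v)"

end

theory Submission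
  imports Defs
begin

text \<open>Write \<open>f(t w\<^sub>1 + (1-t) w\<^sub>2) = t f(w\<^sub>1) + (1-t) f(w\<^sub>2) + c\<close> with \<open>c \<in> C\<close>. Since \<open>C\<close> is a convex
  cone, \<open>C + c \<subseteq> C\<close>, so adding \<open>c\<close> does not increase the distance to \<open>C\<close>; and the distance
  to a closed convex set is a convex function. Hence \<open>w \<mapsto> dist(f w, C)\<close> is convex. For every
  \<open>z \<in> K(t \<xi>\<^sub>1 + (1-t) \<xi>\<^sub>2)\<close> concavity of \<open>K\<close> writes \<open>z = t z\<^sub>1 + (1-t) z\<^sub>2\<close> with \<open>z\<^sub>i \<in> K \<xi>\<^sub>i\<close>,
  and convexity of the distance function at these points bounds the supremum.\<close>

lemma convex_on_infdist:
  fixes C :: "'a::euclidean_space set"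
  assumes "convex C" "closed C"
  shows "convex_on UNIV (\<lambda>y. infdist y C)"
proof (cases "C = {}")
  case True
  then show ?thesis by (simp add: infdist_def convex_on_const)
next
  case False
  show ?thesis
  proof (rule convex_onI)
    fix t :: real and y1 y2 :: 'a
    assume t: "0 < t" "t < 1"
    obtain x1 where x1: "x1 \<in> C" "infdist y1 C = dist y1 x1"
      using infdist_attains_inf[OF \<open>closed C\<close> False] by blast
    obtain x2 where x2: "x2 \<in> C" "infdist y2 C = dist y2 x2"
      using infdist_attains_inf[OF \<open>closed C\<close> False] by blast
    have "(1 - t) *\<^sub>R x1 + t *\<^sub>R x2 \<in> C"
      using convexD[OF \<open>convex C\<close> x1(1) x2(1)] t by simp
    then have "infdist ((1 - t) *\<^sub>R y1 + t *\<^sub>R y2) C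
        \<le> norm ((1 - t) *\<^sub>R (y1 - x1) + t *\<^sub>R (y2 - x2))"
      by (rule infdist_le2) (simp add: dist_norm algebra_simps)
    also have "\<dots> \<le> (1 - t) * dist y1 x1 + t * dist y2 x2"
      using norm_triangle_ineq[of "(1 - t) *\<^sub>R (y1 - x1)" "t *\<^sub>R (y2 - x2)"] t
      by (simp add: dist_norm)
    finally show "infdist ((1 - t) *\<^sub>R y1 + t *\<^sub>R y2) C
        \<le> (1 - t) * infdist y1 C + t * infdist y2 C"
      using x1 x2 by simp
  qed simp
qed

lemma infdist_add_cone_le:
  fixes C :: "'a::real_normed_vector set"
  assumes "convex C" "cone C" "c \<in> C"
  shows "infdist (y + c) C \<le> infdist y C"
proof -
  have add: "x + c \<in> C" if "x \<in> C" for x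
    using assms that convex_cone[of C] by blast
  have "infdist (y + c) C \<le> dist y x" if "x \<in> C" for x
    using infdist_le[OF add[OF that], of "y + c"] by simp
  moreover have "C \<noteq> {}"
    using assms(3) by blast
  ultimately show ?thesis
    by (simp add: infdist_notempty[of C y] cINF_greatest)
qed

lemma convex_on_infdist_C_concave:
  fixes C :: "'c::euclidean_space set"
  assumes "convex C" "cone C" "closed C" and g: "C_concave C g"
  shows "convex_on UNIV (\<lambda>w. infdist (g w) C)"
proof (rule convex_onI)
  fix t :: real and w1 w2
  assume t: "0 < t" "t < 1"
  define c where "c = g ((1 - t) *\<^sub>R w1 + t *\<^sub>R w2) - (1 - t) *\<^sub>R g w1 - t *\<^sub>R g w2"
  have "g (t *\<^sub>R w2 + (1 - t) *\<^sub>R w1) - t *\<^sub>R g w2 - (1 - t) *\<^sub>R g w1 \<in> C"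
    using g t unfolding C_concave_def by simp
  then have "c \<in> C"
    by (simp add: c_def algebra_simps)
  have "infdist (g ((1 - t) *\<^sub>R w1 + t *\<^sub>R w2)) C
      = infdist ((1 - t) *\<^sub>R g w1 + t *\<^sub>R g w2 + c) C"
    by (simp add: c_def)
  also have "\<dots> \<le> infdist ((1 - t) *\<^sub>R g w1 + t *\<^sub>R g w2) C"
    using infdist_add_cone_le[OF assms(1,2) \<open>c \<in> C\<close>] .
  also have "\<dots> \<le> (1 - t) * infdist (g w1) C + t * infdist (g w2) C"
    using convex_onD[OF convex_on_infdist[OF assms(1,3)]] t by simp
  finally show "infdist (g ((1 - t) *\<^sub>R w1 + t *\<^sub>R w2)) C
      \<le> (1 - t) * infdist (g w1) C + t * infdist (g w2) C" .
qed simp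

lemma ereal_convex_fun_SUP_setvalued_concave:
  fixes F :: "'a::real_vector \<Rightarrow> 'b::real_vector set" and \<phi> :: "'a \<times> 'b \<Rightarrow> real"
  assumes F: "setvalued_concave F" and \<phi>: "convex_on UNIV \<phi>"
  shows "ereal_convex_fun (\<lambda>u. SUP z\<in>F u. ereal (\<phi> (u, z)))"
  unfolding ereal_convex_fun_def
proof (intro allI impI)
  fix u v :: 'a and t :: real
  assume t: "0 \<le> t \<and> t \<le> 1"
  let ?S = "\<lambda>u. SUP z\<in>F u. ereal (\<phi> (u, z))"
  show "?S (t *\<^sub>R u + (1 - t) *\<^sub>R v) \<le> ereal t * ?S u + ereal (1 - t) * ?S v"
  proof (rule SUP_least)
    fix z assume "z \<in> F (t *\<^sub>R u + (1 - t) *\<^sub>R v)"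
    then obtain a b where ab: "a \<in> F u" "b \<in> F v" "z = t *\<^sub>R a + (1 - t) *\<^sub>R b"
      using F t unfolding setvalued_concave_def by blast
    have "\<phi> (t *\<^sub>R u + (1 - t) *\<^sub>R v, z) \<le> t * \<phi> (u, a) + (1 - t) * \<phi> (v, b)"
      using convex_onD[OF \<phi>, of "1 - t" "(u, a)" "(v, b)"] t ab(3) by simp
    then have "ereal (\<phi> (t *\<^sub>R u + (1 - t) *\<^sub>R v, z))
        \<le> ereal t * ereal (\<phi> (u, a)) + ereal (1 - t) * ereal (\<phi> (v, b))"
      by simp
    also have "\<dots> \<le> ereal t * ?S u + ereal (1 - t) * ?S v"
      using t ab(1,2) by (intro add_mono ereal_mult_left_mono SUP_upper) auto
    finally show "ereal (\<phi> (t *\<^sub>R u + (1 - t) *\<^sub>R v, z))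
        \<le> ereal t * ?S u + ereal (1 - t) * ?S v" .
  qed
qed

theorem mainTheorem4:
  fixes C :: "'m::euclidean_space set"
    and K :: "'p::euclidean_space \<Rightarrow> 'n::euclidean_space set"
    and f :: "'p \<times> 'n \<times> 'n \<Rightarrow> 'm"
  assumes C: "closed_convex_pointed_cone C"
    and K_graph: "closed {(\<xi>, z). z \<in> K \<xi>}"
    and K_ne: "\<And>\<xi>. K \<xi> \<noteq> {}"
    and K_conc: "setvalued_concave K"
    and f_conc: "C_concave C f"
  shows "ereal_convex_fun (\<lambda>(\<xi>, x). SUP z\<in>K \<xi>. ereal (infdist (f (\<xi>, x, z)) C))"
proof -
  define g where "g = (\<lambda>((\<xi>, x), z). f (\<xi>, x, z))"
  have "C_concave C g"
    using f_conc by (simp add: C_concave_def g_def split_beta)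
  then have "convex_on UNIV (\<lambda>w. infdist (g w) C)"
    using C unfolding closed_convex_pointed_cone_def
    by (blast intro: convex_on_infdist_C_concave)
  moreover have "setvalued_concave (\<lambda>(\<xi>, x). K \<xi>)"
    using K_conc by (simp add: setvalued_concave_def split_beta)
  ultimately have "ereal_convex_fun (\<lambda>u. SUP z\<in>(\<lambda>(\<xi>, x). K \<xi>) u. ereal (infdist (g (u, z)) C))"
    by (rule ereal_convex_fun_SUP_setvalued_concave[rotated])
  then show ?thesis
    by (simp add: g_def split_beta')
qed

end
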